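(* Let $p\in\mathbb{R}$ and $h_p(x)=(1-x)^pK(x)$ on $(0,1)$. Then $h_p$ is strictly convex on $(0,1)$ if and only if $p\le 0$ or $p\ge \frac{3(2+\sqrt2)}{8}$, and $h_p$ is strictly concave on $(0,1)$ if and only if $p\in\big[\frac{3(2-\sqrt2)}{8},1\big]$.
   Context: $K(x)={\cal K}(\sqrt x)=\frac\pi2\,{}_2F_1(1/2,1/2;1;x)$ for $x\in[0,1)$, where ${\cal K}(r)=\int_0^{\pi/2}(1-r^2\sin^2t)^{-1/2}dt$ is the complete elliptic integral of the first kind. *)

theory Defs
  imports "HOL-Analysis.Analysis"
begin

text \<open>Complete elliptic integral of the first kind, as a function of the modulus r.\<close>
definition ellK_mod :: "real \<Rightarrow> real" where
  "ellK_mod r = integral {0..pi/2} (\<lambda>t. 1 / sqrt (1 - r\<^sup>2 * (sin t)\<^sup>2))"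

definition ellK :: "real \<Rightarrow> real" where
  "ellK x = ellK_mod (sqrt x)"

definition strictly_convex_on :: "real set \<Rightarrow> (real \<Rightarrow> real) \<Rightarrow> bool" where
  "strictly_convex_on S f \<longleftrightarrow>
     (\<forall>x\<in>S. \<forall>y\<in>S. \<forall>u::real. x \<noteq> y \<and> 0 < u \<and> u < 1 \<longrightarrow>
        f ((1 - u) * x + u * y) < (1 - u) * f x + u * f y)"

definition strictly_concave_on :: "real set \<Rightarrow> (real \<Rightarrow> real) \<Rightarrow> bool" where
  "strictly_concave_on S f \<longleftrightarrow>
     (\<forall>x\<in>S. \<forall>y\<in>S. \<forall>u::real. x \<noteq> y \<and> 0 < u \<and> u < 1 \<longrightarrow>
        f ((1 - u) * x + u * y) > (1 - u) * f x + u * f y)"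

end

theory Submission
  imports Defs "HOL-Real_Asymp.Real_Asymp"
begin

text \<open>
  Termwise integration of the binomial series gives \<open>K(x) = \<pi>/2 \<Sum> a\<^sub>n x\<^sup>n\<close> with
  \<open>a\<^sub>n = ((1/2)\<^sub>n / n!)\<^sup>2\<close>, and differentiating twice,
  \<open>h\<^sub>p''(x) = \<pi>/2 \<cdot> (1 - x) powr (p - 2) \<cdot> G\<^sub>p(x)\<close> where \<open>G\<^sub>p(x) = \<Sum> a\<^sub>n q\<^sub>p(n + 1) x\<^sup>n\<close>
  and \<open>q\<^sub>p(m) = p\<^sup>2 - p - p/(2m) + 9/(16m(m + 1))\<close>.
  The constant term factors as \<open>q\<^sub>p(1) = (p - p\<^sub>-)(p - p\<^sub>+)\<close> with \<open>p\<^sub>\<plusminus> = 3(2 \<plusminus> \<surd>2)/8\<close>.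
  If \<open>p \<le> 0\<close>, \<open>p \<ge> p\<^sub>+\<close> or \<open>p\<^sub>- \<le> p \<le> 1\<close>, then all \<open>q\<^sub>p(m)\<close> with \<open>m \<ge> 2\<close> have strictly the
  sign that \<open>q\<^sub>p(1)\<close> has weakly, so \<open>G\<^sub>p\<close> has a constant strict sign on \<open>(0,1)\<close>.
  Otherwise either \<open>G\<^sub>p(0) = q\<^sub>p(1)\<close> has the wrong sign, or the limit \<open>p(p - 1)\<close> of \<open>q\<^sub>p(m)\<close> does;
  in the latter case \<open>G\<^sub>p\<close> takes that sign near \<open>x = 1\<close>, because \<open>a\<^sub>n \<ge> 1/(4(n + 1))\<close> makes
  \<open>\<Sum> a\<^sub>n\<close> diverge.
  Below, \<open>a\<^sub>n\<close>, \<open>G\<^sub>p\<close>, \<open>q\<^sub>p\<close> and \<open>p\<^sub>\<plusminus>\<close> are \<open>ellK_coeff\<close>, \<open>convexity_factor p\<close>,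
  \<open>convexity_coeff p\<close> and \<open>p_minus\<close>, \<open>p_plus\<close>.
\<close>

section \<open>Strict convexity on real intervals\<close>

lemma strictly_concave_on_iff_convex_uminus:
  "strictly_concave_on S f \<longleftrightarrow> strictly_convex_on S (\<lambda>x. - f x)"
  unfolding strictly_concave_on_def strictly_convex_on_def by (simp add: algebra_simps)

lemma strictly_convex_on_subset:
  "strictly_convex_on S f \<Longrightarrow> T \<subseteq> S \<Longrightarrow> strictly_convex_on T f"
  unfolding strictly_convex_on_def by blast

lemma not_strictly_convex_and_concave:
  assumes "strictly_convex_on S f" "strictly_concave_on S f" "x \<in> S" "y \<in> S" "x \<noteq> y"
  shows False
proof -
  have "\<forall>u. 0 < u \<and> u < 1 \<longrightarrow> f ((1 - u) * x + u * y) < (1 - u) * f x + u * f y"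
    using assms(1,3-5) unfolding strictly_convex_on_def by blast
  moreover have "\<forall>u. 0 < u \<and> u < 1 \<longrightarrow> f ((1 - u) * x + u * y) > (1 - u) * f x + u * f y"
    using assms(2-5) unfolding strictly_concave_on_def by blast
  ultimately show False by (meson less_asym zero_less_one field_lbound_gt_zero)
qed

lemma DERIV_pos_imp_increasing_on_interval:
  assumes "\<And>x. x \<in> {a<..<b} \<Longrightarrow> (f has_real_derivative f' x) (at x)"
    and "\<And>x. x \<in> {a<..<b} \<Longrightarrow> 0 < f' x"
    and "a < s" "s < t" "t < b"
  shows "f s < f t"
proof -
  obtain w where w: "s < w" "w < t" "f t - f s = (t - s) * f' w"
    using MVT2[of s t f f'] assms by force
  have "0 < (t - s) * f' w" using assms(2)[of w] assms(3-5) w by simp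
  then show ?thesis using w(3) by linarith
qed

lemma strictly_convex_on_interval_if_deriv2_pos:
  fixes f :: "real \<Rightarrow> real"
  assumes f': "\<And>x. x \<in> {a<..<b} \<Longrightarrow> (f has_real_derivative f' x) (at x)"
    and f'': "\<And>x. x \<in> {a<..<b} \<Longrightarrow> (f' has_real_derivative f'' x) (at x)"
    and pos: "\<And>x. x \<in> {a<..<b} \<Longrightarrow> 0 < f'' x"
  shows "strictly_convex_on {a<..<b} f"
proof -
  have chord: "f ((1 - u) * x + u * y) < (1 - u) * f x + u * f y"
    if xy: "a < x" "x < y" "y < b" and u: "0 < u" "u < 1" for x y u :: real
  proof -
    define z where "z = (1 - u) * x + u * y"
    have zx: "z - x = u * (y - x)" and yz: "y - z = (1 - u) * (y - x)"
      by (simp_all add: z_def algebra_simps)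
    have "0 < u * (y - x)" "0 < (1 - u) * (y - x)" using xy u by simp_all
    then have "x < z" "z < y" unfolding zx[symmetric] yz[symmetric] by simp_all
    obtain w1 where w1: "x < w1" "w1 < z" "f z - f x = (z - x) * f' w1"
      using MVT2[of x z f f'] f' \<open>x < z\<close> \<open>z < y\<close> xy by force
    obtain w2 where w2: "z < w2" "w2 < y" "f y - f z = (y - z) * f' w2"
      using MVT2[of z y f f'] f' \<open>x < z\<close> \<open>z < y\<close> xy by force
    have "f' w1 < f' w2"
      using DERIV_pos_imp_increasing_on_interval[OF f'' pos] w1 w2 xy by simp
    then have "u * (1 - u) * (y - x) * f' w1 < u * (1 - u) * (y - x) * f' w2"
      using xy u by simp
    then have "(1 - u) * (f z - f x) < u * (f y - f z)"
      unfolding w1(3) w2(3) zx yz by (simp add: algebra_simps)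
    then show ?thesis unfolding z_def[symmetric] by (simp add: algebra_simps)
  qed
  show ?thesis unfolding strictly_convex_on_def
  proof (intro ballI allI impI)
    fix x y u :: real
    assume x: "x \<in> {a<..<b}" and y: "y \<in> {a<..<b}" and u: "x \<noteq> y \<and> 0 < u \<and> u < 1"
    then consider "x < y" | "y < x" by linarith
    then show "f ((1 - u) * x + u * y) < (1 - u) * f x + u * f y"
    proof cases
      case 1 then show ?thesis using chord x y u by simp
    next
      case 2
      then have "f ((1 - (1 - u)) * y + (1 - u) * x) < (1 - (1 - u)) * f y + (1 - u) * f x"
        using chord[of y x "1 - u"] x y u by simp
      then show ?thesis by (simp add: algebra_simps)
    qed
  qed
qed

lemma strictly_concave_on_interval_if_deriv2_neg:
  fixes f :: "real \<Rightarrow> real"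
  assumes "\<And>x. x \<in> {a<..<b} \<Longrightarrow> (f has_real_derivative f' x) (at x)"
    and "\<And>x. x \<in> {a<..<b} \<Longrightarrow> (f' has_real_derivative f'' x) (at x)"
    and "\<And>x. x \<in> {a<..<b} \<Longrightarrow> f'' x < 0"
  shows "strictly_concave_on {a<..<b} f"
  unfolding strictly_concave_on_iff_convex_uminus
  by (rule strictly_convex_on_interval_if_deriv2_pos[where f' = "\<lambda>x. - f' x" and f'' = "\<lambda>x. - f'' x"])
     (use assms in \<open>auto intro: DERIV_minus\<close>)

lemma continuous_neg_on_subinterval:
  fixes g :: "real \<Rightarrow> real"
  assumes "isCont g z" "g z < 0" "a \<le> z" "z < b"
  obtains c d where "a < c" "c < d" "d < b" "\<And>y. y \<in> {c<..<d} \<Longrightarrow> g y < 0"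
proof -
  have "\<forall>\<^sub>F y in at z. g y < 0"
    using order_tendstoD(2)[OF assms(1)[unfolded isCont_def] assms(2)] .
  then obtain \<delta> where "\<delta> > 0" and \<delta>': "\<And>y. y \<noteq> z \<Longrightarrow> dist y z < \<delta> \<Longrightarrow> g y < 0"
    unfolding eventually_at by blast
  have \<delta>: "g y < 0" if "dist y z < \<delta>" for y
    using \<delta>'[OF _ that] assms(2) by (cases "y = z") auto
  define e where "e = min \<delta> (b - z)"
  have "e > 0" "e \<le> \<delta>" "e \<le> b - z" using \<open>\<delta> > 0\<close> assms by (auto simp: e_def)
  show ?thesis
    by (rule that[of "z + e/4" "z + e/2"])
       (use \<open>e > 0\<close> \<open>e \<le> \<delta>\<close> \<open>e \<le> b - z\<close> assms in \<open>auto intro!: \<delta> simp: dist_real_def\<close>)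
qed

section \<open>Power series on the unit interval\<close>

definition power_series :: "(nat \<Rightarrow> real) \<Rightarrow> real \<Rightarrow> real" where
  "power_series c x = (\<Sum>n. c n * x ^ n)"

lemma summable_power_series_if_bounded:
  fixes c :: "nat \<Rightarrow> real"
  assumes "\<And>n. \<bar>c n\<bar> \<le> B" "\<bar>x\<bar> < 1"
  shows "summable (\<lambda>n. c n * x ^ n)"
proof (rule summable_comparison_test)
  show "\<exists>N. \<forall>n\<ge>N. norm (c n * x ^ n) \<le> B * \<bar>x\<bar> ^ n"
    using assms(1) by (auto simp: abs_mult power_abs intro!: mult_right_mono)
  show "summable (\<lambda>n. B * \<bar>x\<bar> ^ n)"
    using assms(2) by (simp add: summable_geometric)
qed

lemma summable_diffs_unit_disc:
  assumes "\<And>y. \<bar>y\<bar> < 1 \<Longrightarrow> summable (\<lambda>n. c n * y ^ n)" "\<bar>x\<bar> < (1::real)"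
  shows "summable (\<lambda>n. diffs c n * x ^ n)"
  by (rule termdiff_converges[where K = 1]) (use assms in auto)

lemma power_series_has_derivative:
  assumes "\<And>y. \<bar>y\<bar> < 1 \<Longrightarrow> summable (\<lambda>n. c n * y ^ n)" "\<bar>x\<bar> < (1::real)"
  shows "(power_series c has_real_derivative power_series (diffs c) x) (at x)"
  unfolding power_series_def
proof (rule termdiffs_strong)
  show "summable (\<lambda>n. c n * ((1 + \<bar>x\<bar>) / 2) ^ n)" using assms by (intro assms(1)) auto
qed (use assms(2) in auto)

definition coeff_shift :: "(nat \<Rightarrow> real) \<Rightarrow> nat \<Rightarrow> real" where
  "coeff_shift c n = (if n = 0 then 0 else c (n - 1))"

lemma sums_coeff_shift:
  assumes "summable (\<lambda>n. c n * x ^ n)"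
  shows "(\<lambda>n. coeff_shift c n * x ^ n) sums (x * power_series c x)"
proof -
  have "(\<lambda>n. coeff_shift c (Suc n) * x ^ Suc n) sums (x * power_series c x)"
    using sums_mult[OF summable_sums[OF assms], of x]
    by (simp add: coeff_shift_def power_series_def mult_ac)
  then show ?thesis by (subst (asm) sums_Suc_iff) (simp add: coeff_shift_def)
qed

lemma one_minus_inverse_power_ge_half:
  assumes "n \<le> N"
  shows "1 / 2 \<le> (1 - 1 / (2 * (real N + 1))) ^ n"
proof -
  have "1 + real n * (- (1 / (2 * (real N + 1)))) \<le> (1 + - (1 / (2 * (real N + 1)))) ^ n"
    by (rule Bernoulli_inequality) (simp add: field_simps)
  then have "1 - real n / (2 * (real N + 1)) \<le> (1 - 1 / (2 * (real N + 1))) ^ n"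
    by simp
  moreover have "real n / (2 * (real N + 1)) \<le> 1 / 2"
    using assms by (simp add: field_simps)
  ultimately show ?thesis by linarith
qed

lemma power_series_pos_near_1:
  fixes a q :: "nat \<Rightarrow> real"
  assumes a_nonneg: "\<And>n. 0 \<le> a n" and a_le_1: "\<And>n. a n \<le> 1"
    and diverge: "filterlim (\<lambda>N. \<Sum>n<N. a n) at_top sequentially"
    and q: "q \<longlonglongrightarrow> l" and "0 < l"
  shows "\<exists>x\<in>{0<..<1}. 0 < (\<Sum>n. a n * q n * x ^ n)"
proof -
  obtain C where C: "\<And>n. \<bar>q n\<bar> \<le> C"
    using BseqE[OF convergent_imp_Bseq[OF convergentI[OF q]]] by (metis real_norm_def)
  have "\<forall>\<^sub>F n in sequentially. l / 2 < q n"
    using order_tendstoD(1)[OF q, of "l / 2"] \<open>0 < l\<close> by simp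
  then obtain M where M: "\<And>n. M \<le> n \<Longrightarrow> l / 2 < q n"
    unfolding eventually_at_top_linorder by blast
  \<comment> \<open>at \<open>x\<close> with \<open>x\<^sup>N \<ge> 1/2\<close>, the first \<open>M\<close> terms cost at most \<open>M * C\<close>, the later ones below \<open>N\<close> give at least \<open>l/4 * a n\<close>\<close>
  obtain N where "M \<le> N" and N: "real M * (C + l / 4) + 1 \<le> l / 4 * (\<Sum>n<N. a n)"
  proof -
    have "\<forall>\<^sub>F N in sequentially. (real M * (C + l / 4) + 1) / (l / 4) \<le> (\<Sum>n<N. a n)"
      using diverge by (simp add: filterlim_at_top)
    then obtain N where "M \<le> N" "(real M * (C + l / 4) + 1) / (l / 4) \<le> (\<Sum>n<N. a n)"
      by (metis eventually_at_top_linorder nle_le)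
    with \<open>0 < l\<close> show ?thesis by (intro that[of N]) (simp_all add: field_simps)
  qed
  define x where "x = 1 - 1 / (2 * (real N + 1))"
  have x: "0 < x" "x < 1" by (simp_all add: x_def field_simps)
  have summable: "summable (\<lambda>n. a n * q n * x ^ n)"
  proof (rule summable_power_series_if_bounded)
    show "\<bar>a n * q n\<bar> \<le> C" for n
      using mult_mono[OF a_le_1[of n] C[of n] zero_le_one abs_ge_zero] a_nonneg[of n]
      by (simp add: abs_mult)
  qed (use x in simp)
  have "a n * q n * x ^ n \<ge> l / 4 * a n - (if n < M then C + l / 4 else 0)" if "n < N" for n
  proof (cases "n < M")
    case True
    have "\<bar>a n * q n * x ^ n\<bar> \<le> 1 * C * 1"
      unfolding abs_mult using a_nonneg[of n] a_le_1[of n] C[of n] x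
      by (intro mult_mono) (auto simp: power_le_one)
    moreover have "l / 4 * a n \<le> l / 4" using \<open>0 < l\<close> a_le_1[of n] by simp
    ultimately show ?thesis using True by simp
  next
    case False
    have "a n * (l / 2) * (1 / 2) \<le> a n * q n * x ^ n"
      using M[of n] False a_nonneg[of n] \<open>0 < l\<close> one_minus_inverse_power_ge_half[of n N] that
        less_imp_le
      by (intro mult_mono mult_left_mono) (simp_all add: x_def)
    then show ?thesis using False by (simp add: mult.commute)
  qed
  then have "(\<Sum>n<N. l / 4 * a n - (if n < M then C + l / 4 else 0)) \<le> (\<Sum>n<N. a n * q n * x ^ n)"
    by (intro sum_mono) simp
  also have "\<dots> \<le> (\<Sum>n. a n * q n * x ^ n)"
  proof (rule sum_le_suminf[OF summable])
    show "0 \<le> a n * q n * x ^ n" if "n \<in> - {..<N}" for n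
      using that \<open>M \<le> N\<close> M[of n] a_nonneg[of n] \<open>0 < l\<close> x by simp
  qed simp
  finally have "l / 4 * (\<Sum>n<N. a n) - real M * (C + l / 4) \<le> (\<Sum>n. a n * q n * x ^ n)"
    using \<open>M \<le> N\<close> by (simp add: sum_subtractf sum_distrib_left sum.If_cases Int_absorb1 subset_eq)
  with N x show ?thesis by force
qed

section \<open>The Maclaurin series of \<open>K\<close>\<close>

definition wallis_ratio :: "nat \<Rightarrow> real" where
  "wallis_ratio n = pochhammer (1/2) n / fact n"

lemma wallis_ratio_0 [simp]: "wallis_ratio 0 = 1"
  by (simp add: wallis_ratio_def)

lemma wallis_ratio_Suc: "wallis_ratio (Suc n) = wallis_ratio n * (2 * n + 1) / (2 * n + 2)"
proof -
  have "wallis_ratio (Suc n) = wallis_ratio n * ((1/2 + n) / (n + 1))"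
    by (simp add: wallis_ratio_def pochhammer_Suc)
  also have "(1/2 + real n) / (n + 1) = (2 * n + 1) / (2 * n + 2)"
    by (simp add: field_simps)
  finally show ?thesis by simp
qed

lemma wallis_ratio_pos: "0 < wallis_ratio n"
  by (simp add: wallis_ratio_def pochhammer_pos)

lemma wallis_ratio_le_1: "wallis_ratio n \<le> 1"
proof (induction n)
  case (Suc n)
  have "wallis_ratio n * ((2 * n + 1) / (2 * n + 2)) \<le> 1 * 1"
    using Suc wallis_ratio_pos[of n] by (intro mult_mono) auto
  then show ?case by (simp add: wallis_ratio_Suc)
qed simp

lemma sums_inverse_sqrt_one_minus:
  assumes "0 \<le> y" "y < 1"
  shows "(\<lambda>n. wallis_ratio n * y ^ n) sums (1 / sqrt (1 - y))"
proof -
  have "(\<lambda>n. (- (1/2) gchoose n) * (- y) ^ n) sums (1 + (- y)) powr (- (1/2))"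
    by (rule gen_binomial_real) (use assms in auto)
  moreover have "(- (1/2) gchoose n) * (- y) ^ n = wallis_ratio n * y ^ n" for n
    by (simp add: gbinomial_pochhammer wallis_ratio_def power_minus')
  moreover have "(1 + (- y)) powr (- (1/2)) = 1 / sqrt (1 - y)"
    using assms by (simp add: powr_minus_divide powr_half_sqrt)
  ultimately show ?thesis by simp
qed

lemma sin_power_even_has_integral:
  "((\<lambda>t. sin t ^ (2 * n)) has_integral (pi / 2 * wallis_ratio n)) {0..pi/2}"
proof (induction n)
  case 0
  show ?case using has_integral_const_real[of "1::real" 0 "pi/2"] by simp
next
  case (Suc n)
  \<comment> \<open>integration by parts, packaged as the derivative of \<open>cos t * sin t ^ (2n+1)\<close>\<close>
  define \<phi> where "\<phi> t = cos t * sin t ^ (2 * n + 1)" for t :: real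
  have "(\<phi> has_real_derivative (2 * n + 1) * sin t ^ (2 * n) - (2 * n + 2) * sin t ^ (2 * n + 2))
          (at t within {0..pi/2})" for t
  proof -
    have "((\<lambda>t. sin t ^ (2 * n + 1)) has_real_derivative (2 * n + 1) * sin t ^ (2 * n) * cos t) (at t)"
      using DERIV_power[OF DERIV_sin[of t], of "2 * n + 1"] by (simp add: mult_ac)
    from DERIV_mult[OF DERIV_cos this]
    have "(\<phi> has_real_derivative
            cos t * ((2 * n + 1) * sin t ^ (2 * n) * cos t) - sin t * sin t ^ (2 * n + 1)) (at t)"
      unfolding \<phi>_def by (simp add: algebra_simps)
    moreover have "cos t * ((2 * n + 1) * sin t ^ (2 * n) * cos t) - sin t * sin t ^ (2 * n + 1)
        = (2 * n + 1) * sin t ^ (2 * n) * (cos t)\<^sup>2 - sin t ^ (2 * n) * (sin t)\<^sup>2"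
      by (simp add: power2_eq_square power_add algebra_simps)
    also have "\<dots> = (2 * n + 1) * sin t ^ (2 * n) - (2 * n + 2) * sin t ^ (2 * n + 2)"
      by (simp only: cos_squared_eq power_add) (simp add: algebra_simps)
    ultimately show ?thesis by (simp add: has_field_derivative_at_within)
  qed
  then have "((\<lambda>t. (2 * n + 1) * sin t ^ (2 * n) - (2 * n + 2) * sin t ^ (2 * n + 2))
      has_integral (\<phi> (pi/2) - \<phi> 0)) {0..pi/2}"
    by (intro fundamental_theorem_of_calculus)
       (auto simp: has_real_derivative_iff_has_vector_derivative)
  then have "((\<lambda>t. (2 * n + 1) * sin t ^ (2 * n) - (2 * n + 2) * sin t ^ (2 * n + 2))
      has_integral 0) {0..pi/2}"
    by (simp add: \<phi>_def)
  from has_integral_diff[OF has_integral_mult_right[OF Suc.IH, of "2 * n + 1"] this]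
  have "((\<lambda>t. (2 * n + 2) * sin t ^ (2 * Suc n)) has_integral (2 * n + 1) * (pi / 2 * wallis_ratio n))
      {0..pi/2}"
    by simp
  from has_integral_mult_right[OF this, of "1 / (2 * n + 2)"]
  show ?case by (simp add: wallis_ratio_Suc mult_ac)
qed

definition ellK_coeff :: "nat \<Rightarrow> real" where
  "ellK_coeff n = wallis_ratio n ^ 2"

lemma ellK_coeff_pos: "0 < ellK_coeff n"
  unfolding ellK_coeff_def by (rule zero_less_power[OF wallis_ratio_pos])

lemma ellK_coeff_le_1: "ellK_coeff n \<le> 1"
  using wallis_ratio_pos[of n] wallis_ratio_le_1[of n] by (simp add: ellK_coeff_def power_le_one)

lemma ellK_coeff_Suc: "ellK_coeff (Suc n) = ellK_coeff n * ((2 * n + 1) / (2 * n + 2)) ^ 2"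
  by (simp add: ellK_coeff_def wallis_ratio_Suc power_mult_distrib power_divide add_ac)

lemma summable_ellK_coeff: "\<bar>x\<bar> < 1 \<Longrightarrow> summable (\<lambda>n. ellK_coeff n * x ^ n)"
  using ellK_coeff_pos ellK_coeff_le_1
  by (intro summable_power_series_if_bounded[where B = 1]) (auto simp: abs_le_iff less_imp_le)

lemma ellK_eq_power_series:
  assumes "0 \<le> x" "x < 1"
  shows "ellK x = pi / 2 * power_series ellK_coeff x"
proof -
  define f where "f k t = (\<Sum>n<k. wallis_ratio n * x ^ n * sin t ^ (2 * n))" for k t
  define g where "g t = 1 / sqrt (1 - x * (sin t)\<^sup>2)" for t
  \<comment> \<open>expand the integrand by the binomial series and integrate termwise (monotone convergence)\<close>
  have f_integral: "(f k has_integral (\<Sum>n<k. wallis_ratio n * x ^ n * (pi / 2 * wallis_ratio n)))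
      {0..pi/2}" for k
    unfolding f_def
    by (intro has_integral_sum has_integral_mult_right sin_power_even_has_integral) auto
  have f_mono: "f k t \<le> f (Suc k) t" for k t
    unfolding f_def using wallis_ratio_pos[of k] assms by simp
  have f_lim: "(\<lambda>k. f k t) \<longlonglongrightarrow> g t" for t
  proof -
    have "x * (sin t)\<^sup>2 \<le> x" using assms by (simp add: mult_left_le abs_square_le_1)
    then have "(\<lambda>n. wallis_ratio n * (x * (sin t)\<^sup>2) ^ n) sums g t"
      unfolding g_def using assms by (intro sums_inverse_sqrt_one_minus) auto
    moreover have "wallis_ratio n * (x * (sin t)\<^sup>2) ^ n = wallis_ratio n * x ^ n * sin t ^ (2 * n)" for n
      by (simp add: power_mult_distrib power_mult)
    ultimately show ?thesis by (simp add: f_def sums_def)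
  qed
  have "(\<lambda>n. pi / 2 * (ellK_coeff n * x ^ n)) sums (pi / 2 * power_series ellK_coeff x)"
    unfolding power_series_def using summable_ellK_coeff[of x] assms
    by (intro sums_mult summable_sums) auto
  then have "(\<lambda>k. \<Sum>n<k. wallis_ratio n * x ^ n * (pi / 2 * wallis_ratio n))
      \<longlonglongrightarrow> pi / 2 * power_series ellK_coeff x"
    by (simp add: sums_def ellK_coeff_def power2_eq_square mult_ac)
  from has_integral_monotone_convergence_increasing[OF f_integral f_mono f_lim this]
  have "(g has_integral pi / 2 * power_series ellK_coeff x) {0..pi/2}" .
  moreover have "ellK x = integral {0..pi/2} g"
    unfolding ellK_def ellK_mod_def g_def using assms by simp
  ultimately show ?thesis by (simp add: integral_unique)
qed

lemma summable_diffs_ellK_coeff: "\<bar>x\<bar> < 1 \<Longrightarrow> summable (\<lambda>n. diffs ellK_coeff n * x ^ n)"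
  by (rule summable_diffs_unit_disc[OF summable_ellK_coeff])

lemma summable_diffs2_ellK_coeff: "\<bar>x\<bar> < 1 \<Longrightarrow> summable (\<lambda>n. diffs (diffs ellK_coeff) n * x ^ n)"
  by (rule summable_diffs_unit_disc[OF summable_diffs_ellK_coeff])

lemma ellK_has_derivative:
  assumes "0 < x" "x < 1"
  shows "(ellK has_real_derivative pi / 2 * power_series (diffs ellK_coeff) x) (at x)"
proof (rule has_field_derivative_transform_within_open[where S = "{0<..<1}"])
  show "((\<lambda>x. pi / 2 * power_series ellK_coeff x) has_real_derivative
      pi / 2 * power_series (diffs ellK_coeff) x) (at x)"
    using assms by (intro DERIV_cmult power_series_has_derivative summable_ellK_coeff) auto
qed (use assms in \<open>auto simp: ellK_eq_power_series\<close>)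

lemma ellK_coeff_scaled_mono: "real n * ellK_coeff n \<le> real (Suc n) * ellK_coeff (Suc n)"
proof -
  have "real (Suc n) * ((2 * n + 1) / (2 * n + 2))\<^sup>2 = (2 * n + 1)\<^sup>2 / (4 * (n + 1))"
    by (simp add: power2_eq_square divide_simps) (simp add: algebra_simps)
  moreover have "real n \<le> (2 * n + 1)\<^sup>2 / (4 * (n + 1))"
    by (simp add: power2_eq_square divide_simps) (simp add: algebra_simps)
  ultimately have "real n \<le> real (Suc n) * ((2 * n + 1) / (2 * n + 2))\<^sup>2"
    by simp
  from mult_right_mono[OF this less_imp_le[OF ellK_coeff_pos[of n]]]
  show ?thesis by (simp add: ellK_coeff_Suc mult_ac add_ac)
qed

lemma inverse_Suc_le_ellK_coeff: "inverse (real (Suc n)) \<le> 4 * ellK_coeff n"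
proof -
  have "1 / 4 \<le> real (Suc n) * ellK_coeff n"
  proof (cases n)
    case 0
    then show ?thesis by (simp add: ellK_coeff_def)
  next
    case (Suc m)
    have "ellK_coeff 1 = 1 / 4"
      by (simp add: ellK_coeff_def wallis_ratio_Suc power2_eq_square)
    then have "1 / 4 \<le> real n * ellK_coeff n"
      using lift_Suc_mono_le[of "\<lambda>n. real n * ellK_coeff n", OF ellK_coeff_scaled_mono, of 1 n] Suc
      by simp
    also have "\<dots> \<le> real (Suc n) * ellK_coeff n"
      using ellK_coeff_pos[of n] by simp
    finally show ?thesis .
  qed
  then show ?thesis
    by (simp add: inverse_eq_divide pos_divide_le_eq mult_ac)
qed

lemma ellK_coeff_partial_sums_at_top: "filterlim (\<lambda>N. \<Sum>n<N. ellK_coeff n) at_top sequentially"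
proof (rule filterlim_at_top_mono)
  show "filterlim (\<lambda>N. 1 / 4 * harm N :: real) at_top sequentially"
    by (intro filterlim_tendsto_pos_mult_at_top[OF tendsto_const] harm_at_top) simp
  have "harm N \<le> 4 * (\<Sum>n<N. ellK_coeff n)" for N :: nat
    unfolding harm_altdef sum_distrib_left by (intro sum_mono inverse_Suc_le_ellK_coeff)
  then show "\<forall>\<^sub>F N in sequentially. 1 / 4 * harm N \<le> (\<Sum>n<N. ellK_coeff n)"
    by (intro always_eventually allI) (simp add: field_simps)
qed

section \<open>The second derivative of \<open>h\<^sub>p\<close>\<close>

definition convexity_factor :: "real \<Rightarrow> real \<Rightarrow> real" where
  "convexity_factor p x = p * (p - 1) * power_series ellK_coeff x
     - 2 * p * (1 - x) * power_series (diffs ellK_coeff) x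
     + (1 - x)\<^sup>2 * power_series (diffs (diffs ellK_coeff)) x"

lemma continuous_convexity_factor: "\<bar>x\<bar> < 1 \<Longrightarrow> isCont (convexity_factor p) x"
  unfolding convexity_factor_def
  by (intro continuous_intros DERIV_isCont[OF power_series_has_derivative]
      summable_ellK_coeff summable_diffs_ellK_coeff summable_diffs2_ellK_coeff)

lemma powr_one_minus_has_derivative:
  "x < 1 \<Longrightarrow> ((\<lambda>x. (1 - x) powr r) has_real_derivative - r * (1 - x) powr (r - 1)) (at x)"
  by (auto intro!: derivative_eq_intros)

lemma hp_has_derivative:
  assumes "0 < x" "x < 1"
  shows "((\<lambda>x. (1 - x) powr p * ellK x) has_real_derivative
      pi / 2 * ((1 - x) powr p * power_series (diffs ellK_coeff) x
                - p * (1 - x) powr (p - 1) * power_series ellK_coeff x)) (at x)"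
  using DERIV_mult[OF powr_one_minus_has_derivative ellK_has_derivative, of x p] assms
  by (simp add: ellK_eq_power_series algebra_simps)

lemma hp_deriv_has_derivative:
  assumes "0 < x" "x < 1"
  shows "((\<lambda>x. pi / 2 * ((1 - x) powr p * power_series (diffs ellK_coeff) x
                - p * (1 - x) powr (p - 1) * power_series ellK_coeff x)) has_real_derivative
      pi / 2 * (1 - x) powr (p - 2) * convexity_factor p x) (at x)"
proof -
  have x: "\<bar>x\<bar> < 1" using assms by simp
  have powr_p1: "(1 - x) powr (p - 1) = (1 - x) powr (p - 2) * (1 - x)"
    and powr_p: "(1 - x) powr p = (1 - x) powr (p - 2) * (1 - x)\<^sup>2"
    using powr_add[of "1 - x" "p - 2" 1] powr_add[of "1 - x" "p - 2" 2] assms by simp_all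
  show ?thesis
    using assms
    by (auto intro!: derivative_eq_intros power_series_has_derivative[OF summable_ellK_coeff x]
        power_series_has_derivative[OF summable_diffs_ellK_coeff x]
        simp: convexity_factor_def powr_p1 powr_p power2_eq_square field_simps)
qed

definition convexity_coeff :: "real \<Rightarrow> real \<Rightarrow> real" where
  "convexity_coeff p m = p\<^sup>2 - p - p / (2 * m) + 9 / (16 * m * (m + 1))"

lemma convexity_factor_coeff_eq:
  "p * (p - 1) * ellK_coeff n
   - 2 * p * (real (Suc n) * ellK_coeff (Suc n) - real n * ellK_coeff n)
   + (real (Suc n) * real (Suc (Suc n)) * ellK_coeff (Suc (Suc n))
      - 2 * (real n * real (Suc n) * ellK_coeff (Suc n)) + (real n - 1) * real n * ellK_coeff n)
   = ellK_coeff n * convexity_coeff p (Suc n)"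
proof -
  define k where "k = real n"
  define A where "A = ellK_coeff n"
  have "k \<ge> 0" by (simp add: k_def)
  have e1: "ellK_coeff (Suc n) = A * ((2 * k + 1) / (2 * k + 2))\<^sup>2"
    by (simp add: ellK_coeff_Suc A_def k_def)
  have e2: "ellK_coeff (Suc (Suc n)) = A * ((2 * k + 1) / (2 * k + 2))\<^sup>2 * ((2 * k + 3) / (2 * k + 4))\<^sup>2"
    by (simp add: ellK_coeff_Suc e1 A_def k_def add_ac mult_ac)
  show ?thesis
    unfolding e1 e2 A_def[symmetric] k_def[symmetric] convexity_coeff_def of_nat_Suc
    using \<open>k \<ge> 0\<close> by (simp add: divide_simps) algebra
qed

lemma diffs_ellK_coeff: "diffs ellK_coeff n = real (Suc n) * ellK_coeff (Suc n)"
  by (simp add: diffs_def)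

lemma diffs2_ellK_coeff:
  "diffs (diffs ellK_coeff) n = real (Suc n) * real (Suc (Suc n)) * ellK_coeff (Suc (Suc n))"
  by (simp add: diffs_def)

lemma convexity_factor_sums:
  assumes "\<bar>x\<bar> < 1"
  shows "(\<lambda>n. ellK_coeff n * convexity_coeff p (Suc n) * x ^ n) sums convexity_factor p x"
proof -
  let ?F0 = "power_series ellK_coeff x"
    and ?F1 = "power_series (diffs ellK_coeff) x"
    and ?F2 = "power_series (diffs (diffs ellK_coeff)) x"
    and ?s1 = "coeff_shift (diffs ellK_coeff)"
    and ?s2 = "coeff_shift (diffs (diffs ellK_coeff))"
  have F0: "(\<lambda>n. ellK_coeff n * x ^ n) sums ?F0"
    and F1: "(\<lambda>n. diffs ellK_coeff n * x ^ n) sums ?F1"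
    and F2: "(\<lambda>n. diffs (diffs ellK_coeff) n * x ^ n) sums ?F2"
    unfolding power_series_def using assms
    by (simp_all add: summable_sums summable_ellK_coeff summable_diffs_ellK_coeff summable_diffs2_ellK_coeff)
  \<comment> \<open>multiplication by \<open>x\<close> shifts coefficients, which expands \<open>(1 - x) F'\<close> and \<open>(1 - x)\<^sup>2 F''\<close>\<close>
  have xF1: "(\<lambda>n. ?s1 n * x ^ n) sums (x * ?F1)"
    and xF2: "(\<lambda>n. ?s2 n * x ^ n) sums (x * ?F2)"
    using F1 F2 by (simp_all add: sums_coeff_shift sums_summable)
  have "power_series ?s2 x = x * ?F2"
    using xF2 by (simp add: power_series_def sums_iff)
  then have xxF2: "(\<lambda>n. coeff_shift ?s2 n * x ^ n) sums (x * (x * ?F2))"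
    using sums_coeff_shift[OF sums_summable[OF xF2]] by simp
  have "(\<lambda>n. p * (p - 1) * (ellK_coeff n * x ^ n)
          - 2 * p * (diffs ellK_coeff n * x ^ n - ?s1 n * x ^ n)
          + (diffs (diffs ellK_coeff) n * x ^ n - 2 * (?s2 n * x ^ n) + coeff_shift ?s2 n * x ^ n))
      sums (p * (p - 1) * ?F0 - 2 * p * (?F1 - x * ?F1) + (?F2 - 2 * (x * ?F2) + x * (x * ?F2)))"
    by (intro sums_add sums_diff sums_mult F0 F1 F2 xF1 xF2 xxF2)
  moreover have "p * (p - 1) * ?F0 - 2 * p * (?F1 - x * ?F1) + (?F2 - 2 * (x * ?F2) + x * (x * ?F2))
      = convexity_factor p x"
    by (simp add: convexity_factor_def power2_eq_square algebra_simps)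
  moreover have "p * (p - 1) * (ellK_coeff n * x ^ n)
          - 2 * p * (diffs ellK_coeff n * x ^ n - ?s1 n * x ^ n)
          + (diffs (diffs ellK_coeff) n * x ^ n - 2 * (?s2 n * x ^ n) + coeff_shift ?s2 n * x ^ n)
      = ellK_coeff n * convexity_coeff p (Suc n) * x ^ n" for n
  proof -
    have s1: "?s1 n = real n * ellK_coeff n"
      by (cases n) (simp_all add: coeff_shift_def diffs_def)
    have s2: "?s2 n = real n * real (Suc n) * ellK_coeff (Suc n)"
      by (cases n) (simp_all add: coeff_shift_def diffs_def)
    have ss2: "coeff_shift ?s2 n = (real n - 1) * real n * ellK_coeff n"
      by (cases n; cases "n - 1") (simp_all add: coeff_shift_def diffs_def)
    show ?thesis
      unfolding s1 s2 ss2 diffs_ellK_coeff diffs2_ellK_coeff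
        convexity_factor_coeff_eq[of p n, symmetric]
      by (simp add: algebra_simps)
  qed
  ultimately show ?thesis by simp
qed

lemma convexity_factor_0: "convexity_factor p 0 = convexity_coeff p 1"
  using sums_unique[OF convexity_factor_sums[of 0 p]] by (simp add: ellK_coeff_def)

lemma convexity_coeff_tendsto: "(\<lambda>n. convexity_coeff p (Suc n)) \<longlonglongrightarrow> p * (p - 1)"
proof -
  have "(\<lambda>n. convexity_coeff p (Suc n)) \<longlonglongrightarrow> p\<^sup>2 - p"
    unfolding convexity_coeff_def by real_asymp
  then show ?thesis by (simp add: power2_eq_square right_diff_distrib)
qed

section \<open>Signs of the coefficients\<close>

definition p_minus :: real where "p_minus = 3 * (2 - sqrt 2) / 8"

definition p_plus :: real where "p_plus = 3 * (2 + sqrt 2) / 8"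

lemma p_minus_pos: "0 < p_minus" and p_minus_less_1: "p_minus < 1" and p_plus_gt_1: "1 < p_plus"
proof -
  have "sqrt 2 < (2::real)"
    by (rule real_less_lsqrt) (simp_all add: power2_eq_square)
  moreover have "(4/3::real) < sqrt 2"
    by (rule real_less_rsqrt) (simp add: power2_eq_square)
  ultimately show "0 < p_minus" "p_minus < 1" "1 < p_plus"
    by (simp_all add: p_minus_def p_plus_def)
qed

lemma convexity_coeff_1: "convexity_coeff p 1 = (p - p_minus) * (p - p_plus)"
proof -
  have sum: "p_minus + p_plus = 3 / 2" and prod: "p_minus * p_plus = 9 / 32"
    by (simp_all add: p_minus_def p_plus_def field_simps)
  have "(p - p_minus) * (p - p_plus) = p\<^sup>2 - (p_minus + p_plus) * p + p_minus * p_plus"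
    by (simp add: power2_eq_square algebra_simps)
  then show ?thesis
    unfolding sum prod by (simp add: convexity_coeff_def)
qed

lemma convexity_coeff_pos_if_nonpos: "p \<le> 0 \<Longrightarrow> 0 < m \<Longrightarrow> 0 < convexity_coeff p m"
  unfolding convexity_coeff_def
  by (smt (verit) divide_nonpos_pos zero_le_power2 divide_pos_pos mult_pos_pos)

lemma convexity_coeff_eq_at_1_plus:
  "0 < m \<Longrightarrow> convexity_coeff p m
     = convexity_coeff p 1 + (m - 1) / m * (p / 2 - 9 * (m + 2) / (32 * (m + 1)))"
  unfolding convexity_coeff_def by (simp add: divide_simps) (simp add: algebra_simps power2_eq_square)

lemma convexity_coeff_eq_convex_comb:
  "0 < m \<Longrightarrow> convexity_coeff p m
     = (1 - 1 / m) * (p\<^sup>2 - p) + 1 / m * (p\<^sup>2 - p - p / 2 + 9 / (16 * (m + 1)))"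
  unfolding convexity_coeff_def by (simp add: divide_simps) (simp add: algebra_simps power2_eq_square)

lemma convexity_coeff_pos_if_ge_p_plus:
  assumes "p_plus \<le> p" "1 < m"
  shows "0 < convexity_coeff p m"
proof -
  have "0 \<le> convexity_coeff p 1"
    using assms p_minus_less_1 p_plus_gt_1 by (simp add: convexity_coeff_1)
  moreover have "9 * (m + 2) / (32 * (m + 1)) < 1 / 2"
    using assms by (simp add: field_simps)
  then have "9 * (m + 2) / (32 * (m + 1)) < p / 2"
    using assms p_plus_gt_1 by linarith
  then have "0 < (m - 1) / m * (p / 2 - 9 * (m + 2) / (32 * (m + 1)))"
    using assms by simp
  ultimately show ?thesis
    using convexity_coeff_eq_at_1_plus[of m p] assms by simp
qed

lemma convexity_coeff_neg_if_between:
  assumes "p_minus \<le> p" "p \<le> 1" "1 < m"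
  shows "convexity_coeff p m < 0"
proof -
  have "p\<^sup>2 - p - p / 2 + 9 / 32 \<le> 0"
    using assms p_minus_pos p_plus_gt_1 mult_nonneg_nonpos[of "p - p_minus" "p - p_plus"]
    by (simp add: convexity_coeff_1[symmetric] convexity_coeff_def)
  moreover have "9 / (16 * (m + 1)) < 9 / 32"
    using assms by (simp add: field_simps)
  ultimately have "p\<^sup>2 - p - p / 2 + 9 / (16 * (m + 1)) < 0"
    by linarith
  then have "1 / m * (p\<^sup>2 - p - p / 2 + 9 / (16 * (m + 1))) < 0"
    using assms by (intro mult_pos_neg) simp_all
  moreover have "(1 - 1 / m) * (p\<^sup>2 - p) \<le> 0"
    using assms p_minus_pos
    by (intro mult_nonneg_nonpos) (simp_all add: power2_eq_square mult_left_le_one_le)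
  ultimately show ?thesis
    using convexity_coeff_eq_convex_comb[of m p] assms by simp
qed

lemma convexity_factor_pos:
  assumes "p \<le> 0 \<or> p_plus \<le> p" "0 < x" "x < 1"
  shows "0 < convexity_factor p x"
proof -
  have sums: "(\<lambda>n. ellK_coeff n * convexity_coeff p (Suc n) * x ^ n) sums convexity_factor p x"
    using assms by (intro convexity_factor_sums) auto
  have "0 \<le> convexity_coeff p (Suc n)" for n
    using assms(1) convexity_coeff_pos_if_nonpos[of p "Suc n"] convexity_coeff_1[of p]
      convexity_coeff_pos_if_ge_p_plus[of p "Suc n"] p_minus_less_1 p_plus_gt_1
    by (cases n) (auto simp: less_imp_le)
  then have "0 \<le> ellK_coeff n * convexity_coeff p (Suc n) * x ^ n" for n
    using ellK_coeff_pos[of n] assms(2) by simp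
  moreover have "0 < ellK_coeff 1 * convexity_coeff p (Suc 1) * x ^ 1"
    using assms convexity_coeff_pos_if_nonpos convexity_coeff_pos_if_ge_p_plus ellK_coeff_pos[of 1]
    by force
  ultimately have "0 < (\<Sum>n. ellK_coeff n * convexity_coeff p (Suc n) * x ^ n)"
    by (rule suminf_pos2[OF sums_summable[OF sums]])
  then show ?thesis using sums_unique[OF sums] by simp
qed

lemma convexity_factor_neg:
  assumes "p_minus \<le> p" "p \<le> 1" "0 < x" "x < 1"
  shows "convexity_factor p x < 0"
proof -
  have sums: "(\<lambda>n. ellK_coeff n * - convexity_coeff p (Suc n) * x ^ n) sums - convexity_factor p x"
    using sums_minus[OF convexity_factor_sums[of x p]] assms by simp
  have "0 \<le> - convexity_coeff p (Suc n)" for n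
    using assms(1,2) convexity_coeff_neg_if_between[of p "Suc n"] convexity_coeff_1[of p]
      p_minus_less_1 p_plus_gt_1
    by (cases n) (auto simp: mult_nonneg_nonpos less_imp_le)
  then have "0 \<le> ellK_coeff n * - convexity_coeff p (Suc n) * x ^ n" for n
    using ellK_coeff_pos[of n] assms(3) by (simp only: zero_le_mult_iff zero_le_power) simp
  moreover have "0 < ellK_coeff 1 * - convexity_coeff p (Suc 1) * x ^ 1"
    using assms convexity_coeff_neg_if_between[of p "Suc 1"] ellK_coeff_pos[of 1]
    by (simp add: mult_pos_neg mult_neg_pos)
  ultimately have "0 < (\<Sum>n. ellK_coeff n * - convexity_coeff p (Suc n) * x ^ n)"
    by (rule suminf_pos2[OF sums_summable[OF sums]])
  then show ?thesis using sums_unique[OF sums] by simp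
qed

lemma convexity_factor_pos_near_1:
  assumes "0 < p * (p - 1)"
  shows "\<exists>x\<in>{0<..<1}. 0 < convexity_factor p x"
proof -
  obtain x where x: "x \<in> {0<..<1}" "0 < (\<Sum>n. ellK_coeff n * convexity_coeff p (Suc n) * x ^ n)"
    using power_series_pos_near_1[OF less_imp_le[OF ellK_coeff_pos] ellK_coeff_le_1
        ellK_coeff_partial_sums_at_top convexity_coeff_tendsto assms] by blast
  moreover have "convexity_factor p x = (\<Sum>n. ellK_coeff n * convexity_coeff p (Suc n) * x ^ n)"
    using x by (intro sums_unique convexity_factor_sums) auto
  ultimately show ?thesis by (intro bexI[of _ x]) simp_all
qed

lemma convexity_factor_neg_near_1:
  assumes "p * (p - 1) < 0"
  shows "\<exists>x\<in>{0<..<1}. convexity_factor p x < 0"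
proof -
  have "\<exists>x\<in>{0<..<1}. 0 < (\<Sum>n. ellK_coeff n * - convexity_coeff p (Suc n) * x ^ n)"
    by (rule power_series_pos_near_1[OF less_imp_le[OF ellK_coeff_pos] ellK_coeff_le_1
        ellK_coeff_partial_sums_at_top tendsto_minus[OF convexity_coeff_tendsto]])
       (use assms in simp)
  then obtain x where x: "x \<in> {0<..<1}" "0 < (\<Sum>n. ellK_coeff n * - convexity_coeff p (Suc n) * x ^ n)"
    by blast
  moreover have "- convexity_factor p x = (\<Sum>n. ellK_coeff n * - convexity_coeff p (Suc n) * x ^ n)"
    using x sums_minus[OF convexity_factor_sums[of x p]] by (intro sums_unique) auto
  ultimately show ?thesis by (intro bexI[of _ x]) simp_all
qed

section \<open>Convexity and concavity of \<open>h\<^sub>p\<close>\<close>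

lemma hp_strictly_convex_on:
  assumes "0 \<le> c" "d \<le> 1" "\<And>x. x \<in> {c<..<d} \<Longrightarrow> 0 < convexity_factor p x"
  shows "strictly_convex_on {c<..<d} (\<lambda>x. (1 - x) powr p * ellK x)"
  by (rule strictly_convex_on_interval_if_deriv2_pos[OF hp_has_derivative hp_deriv_has_derivative])
     (use assms in auto)

lemma hp_strictly_concave_on:
  assumes "0 \<le> c" "d \<le> 1" "\<And>x. x \<in> {c<..<d} \<Longrightarrow> convexity_factor p x < 0"
  shows "strictly_concave_on {c<..<d} (\<lambda>x. (1 - x) powr p * ellK x)"
  by (rule strictly_concave_on_interval_if_deriv2_neg[OF hp_has_derivative hp_deriv_has_derivative])
     (use assms in \<open>auto simp: mult_pos_neg\<close>)

lemma hp_not_strictly_convex: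
  assumes "x0 \<in> {0..<1}" "convexity_factor p x0 < 0"
  shows "\<not> strictly_convex_on {0<..<1} (\<lambda>x. (1 - x) powr p * ellK x)"
proof
  assume convex: "strictly_convex_on {0<..<1} (\<lambda>x. (1 - x) powr p * ellK x)"
  obtain c d where cd: "0 < c" "c < d" "d < 1" "\<And>y. y \<in> {c<..<d} \<Longrightarrow> convexity_factor p y < 0"
    using continuous_neg_on_subinterval[OF continuous_convexity_factor assms(2), where a = 0 and b = 1]
      assms(1) by auto
  have "strictly_convex_on {c<..<d} (\<lambda>x. (1 - x) powr p * ellK x)"
    using convex cd by (auto intro: strictly_convex_on_subset)
  moreover have "strictly_concave_on {c<..<d} (\<lambda>x. (1 - x) powr p * ellK x)"
    using cd by (intro hp_strictly_concave_on) auto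
  ultimately show False
    using cd(2) by (intro not_strictly_convex_and_concave[of "{c<..<d}" _ "(2*c+d)/3" "(c+2*d)/3"]) auto
qed

lemma hp_not_strictly_concave:
  assumes "x0 \<in> {0..<1}" "0 < convexity_factor p x0"
  shows "\<not> strictly_concave_on {0<..<1} (\<lambda>x. (1 - x) powr p * ellK x)"
proof
  assume concave: "strictly_concave_on {0<..<1} (\<lambda>x. (1 - x) powr p * ellK x)"
  obtain c d where cd: "0 < c" "c < d" "d < 1" "\<And>y. y \<in> {c<..<d} \<Longrightarrow> - convexity_factor p y < 0"
    using continuous_neg_on_subinterval[where g = "\<lambda>x. - convexity_factor p x" and z = x0 and a = 0 and b = 1]
      continuous_convexity_factor assms by (auto intro: continuous_intros)
  have "strictly_concave_on {c<..<d} (\<lambda>x. (1 - x) powr p * ellK x)"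
    using concave cd unfolding strictly_concave_on_iff_convex_uminus
    by (auto intro: strictly_convex_on_subset)
  moreover have "strictly_convex_on {c<..<d} (\<lambda>x. (1 - x) powr p * ellK x)"
    using cd by (intro hp_strictly_convex_on) auto
  ultimately show False
    using cd(2) by (intro not_strictly_convex_and_concave[of "{c<..<d}" _ "(2*c+d)/3" "(c+2*d)/3"]) auto
qed

lemma hp_strictly_convex_iff:
  "strictly_convex_on {0<..<1} (\<lambda>x. (1 - x) powr p * ellK x) \<longleftrightarrow> p \<le> 0 \<or> p_plus \<le> p"
proof
  assume "p \<le> 0 \<or> p_plus \<le> p"
  then show "strictly_convex_on {0<..<1} (\<lambda>x. (1 - x) powr p * ellK x)"
    by (intro hp_strictly_convex_on convexity_factor_pos) auto
next
  assume "strictly_convex_on {0<..<1} (\<lambda>x. (1 - x) powr p * ellK x)"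
  moreover have "\<exists>x0\<in>{0..<1}. convexity_factor p x0 < 0" if "0 < p" "p < p_plus"
  proof (cases "p < 1")
    case True
    then show ?thesis using that convexity_factor_neg_near_1[of p] by (force simp: mult_pos_neg)
  next
    case False
    then show ?thesis
      using that p_minus_less_1
      by (intro bexI[of _ 0]) (simp_all add: convexity_factor_0 convexity_coeff_1 mult_pos_neg)
  qed
  ultimately show "p \<le> 0 \<or> p_plus \<le> p"
    using hp_not_strictly_convex by force
qed

lemma hp_strictly_concave_iff:
  "strictly_concave_on {0<..<1} (\<lambda>x. (1 - x) powr p * ellK x) \<longleftrightarrow> p_minus \<le> p \<and> p \<le> 1"
proof
  assume "p_minus \<le> p \<and> p \<le> 1"
  then show "strictly_concave_on {0<..<1} (\<lambda>x. (1 - x) powr p * ellK x)"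
    by (intro hp_strictly_concave_on convexity_factor_neg) auto
next
  assume "strictly_concave_on {0<..<1} (\<lambda>x. (1 - x) powr p * ellK x)"
  moreover have "\<exists>x0\<in>{0..<1}. 0 < convexity_factor p x0" if "p < p_minus \<or> 1 < p"
  proof (cases "1 < p")
    case True
    then show ?thesis using convexity_factor_pos_near_1[of p] by force
  next
    case False
    then show ?thesis
      using that p_minus_less_1 p_plus_gt_1
      by (intro bexI[of _ 0]) (simp_all add: convexity_factor_0 convexity_coeff_1 mult_neg_neg)
  qed
  ultimately show "p_minus \<le> p \<and> p \<le> 1"
    using hp_not_strictly_concave by force
qed

theorem corollary1:
  fixes p :: real
  defines "h \<equiv> (\<lambda>x::real. (1 - x) powr p * ellK x)"
  shows "(strictly_convex_on {0<..<1} h \<longleftrightarrow> p \<le> 0 \<or> p \<ge> 3 * (2 + sqrt 2) / 8)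
       \<and> (strictly_concave_on {0<..<1} h \<longleftrightarrow> 3 * (2 - sqrt 2) / 8 \<le> p \<and> p \<le> 1)"
  using hp_strictly_convex_iff[of p] hp_strictly_concave_iff[of p]
  unfolding h_def p_minus_def p_plus_def by simp

end
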